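(* Let $\sigma\in S_n$, $\tau\in S_{n+1}$ and $\sigma\prec\tau$. Then $\mathrm{al}(\tau)\le\mathrm{al}(\sigma)+2$ and, for every $k\in\mathbf{N}$, $s_k(\tau)\le s_k(\sigma)+2$.
   Context: $S_n$ is the set of permutations of $[n]$; $\pi\prec\rho$ means $\rho$ has a subsequence order-isomorphic to $\pi$. For a permutation $\pi$ of length $n$ and $A\subset[n]$, $\pi|A$ is the permutation order-isomorphic to the subsequence of $\pi$ at positions in $A$. A permutation $\sigma$ is alternating if $\sigma(\{1,3,5,\dots\})>\sigma(\{2,4,6,\dots\})$. $\mathrm{al}(\pi)$ is the maximum length of an alternating permutation $\rho$ with $\rho\prec\pi$ or $\rho\prec\pi^{-1}$. For $\sigma\in S_n,\tau\in S_m$, $\sigma\oplus\tau\in S_{n+m}$ equals $\sigma(i)$ at $i\le n$ and $n+\tau(i-n)$ at $i>n$; $\sigma\ominus\tau$ equals $m+\sigma(i)$ at $i\le n$ and $\tau(i-n)$ at $i>n$. Up-(down-)indecomposable means not of the form $\sigma\oplus\tau$ ($\sigma\ominus\tau$) with both nonempty; $h^+(\pi)$ ($h^-(\pi)$) is the maximum length of a block in the unique decomposition of $\pi$ as a $\oplus$-sum of up-indecomposables ($\ominus$-sum of down-indecomposables). $H_k^\pm=\{\pi:h^\pm(\pi)<k\}$. For $k\ge2$ and $\pi\in S_n$, $s_k(\pi)$ is the number $r$ of intervals in the greedy partition $I_1<\dots<I_r$ of $[n]$ where $I_1$ is the longest initial interval with $\pi|I_1\in H_k^+\cup H_k^-$,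 $I_2$ the longest following interval with $\pi|I_2\in H_k^+\cup H_k^-$, etc. By convention $s_1(\pi)=\infty$ for all $\pi$. *)

theory Defs
  imports Main "HOL-Library.Extended_Nat"
begin

text \<open>Permutations of [n] are represented as lists of length n listing pi(1),...,pi(n).\<close>

definition is_perm :: "nat \<Rightarrow> nat list \<Rightarrow> bool" where
  "is_perm n xs \<longleftrightarrow> distinct xs \<and> set xs = {1..n}"

text \<open>Standardisation: the permutation order-isomorphic to a list of distinct naturals.\<close>
definition std :: "nat list \<Rightarrow> nat list" where
  "std xs = map (\<lambda>x. card {y \<in> set xs. y \<le> x}) xs"

text \<open>restriction pi|A to a set of (0-based) positions\<close>
definition restr :: "nat list \<Rightarrow> nat set \<Rightarrow> nat list" where
  "restr xs A = std (nths xs A)"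

definition contained :: "nat list \<Rightarrow> nat list \<Rightarrow> bool" where
  "contained p r \<longleftrightarrow> (\<exists>A. A \<subseteq> {..<length r} \<and> restr r A = p)"

definition perm_inv :: "nat list \<Rightarrow> nat list" where
  "perm_inv xs = map (\<lambda>v. Suc (THE i. i < length xs \<and> xs ! i = v)) [1..<Suc (length xs)]"

text \<open>alternating: values at odd positions 1,3,5,... (0-based indices 0,2,4,...) exceed
  values at even positions 2,4,... (0-based 1,3,...)\<close>
definition alternating :: "nat list \<Rightarrow> bool" where
  "alternating xs \<longleftrightarrow>
     (\<forall>i<length xs. \<forall>j<length xs. even i \<and> odd j \<longrightarrow> xs ! i > xs ! j)"

definition al :: "nat list \<Rightarrow> nat" where
  "al p = Max {length r | r. alternating r \<and> (contained r p \<or> contained r (perm_inv p))}"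

definition oplus :: "nat list \<Rightarrow> nat list \<Rightarrow> nat list" where
  "oplus s t = s @ map (\<lambda>x. length s + x) t"

definition ominus :: "nat list \<Rightarrow> nat list \<Rightarrow> nat list" where
  "ominus s t = map (\<lambda>x. length t + x) s @ t"

definition up_indec :: "nat list \<Rightarrow> bool" where
  "up_indec p \<longleftrightarrow> \<not> (\<exists>s t. s \<noteq> [] \<and> t \<noteq> [] \<and> is_perm (length s) s \<and>
       is_perm (length t) t \<and> p = oplus s t)"

definition down_indec :: "nat list \<Rightarrow> bool" where
  "down_indec p \<longleftrightarrow> \<not> (\<exists>s t. s \<noteq> [] \<and> t \<noteq> [] \<and> is_perm (length s) s \<and>
       is_perm (length t) t \<and> p = ominus s t)"

text \<open>H_k^+ = {pi. h^+(pi) < k}: pi is the (unique) oplus-sum of up-indecomposable blocks,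
  each of length < k.  Analogously H_k^-.\<close>
definition H_plus :: "nat \<Rightarrow> nat list \<Rightarrow> bool" where
  "H_plus k p \<longleftrightarrow> (\<exists>bs. p = foldr oplus bs [] \<and>
      (\<forall>b\<in>set bs. b \<noteq> [] \<and> is_perm (length b) b \<and> up_indec b \<and> length b < k))"

definition H_minus :: "nat \<Rightarrow> nat list \<Rightarrow> bool" where
  "H_minus k p \<longleftrightarrow> (\<exists>bs. p = foldr ominus bs [] \<and>
      (\<forall>b\<in>set bs. b \<noteq> [] \<and> is_perm (length b) b \<and> down_indec b \<and> length b < k))"

text \<open>Greedy partition count: repeatedly cut off the longest initial segment whose
  standardisation satisfies P; the first argument is fuel (the length suffices when
  every singleton satisfies P, which holds for k >= 2).\<close>
fun greedy_count :: "(nat list \<Rightarrow> bool) \<Rightarrow> nat \<Rightarrow> nat list \<Rightarrow> nat" where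
  "greedy_count P 0 xs = 0"
| "greedy_count P (Suc f) xs =
     (if xs = [] then 0
      else (let m = (GREATEST j. j \<le> length xs \<and> P (std (take j xs)))
            in Suc (greedy_count P f (drop m xs))))"

definition s_k :: "nat \<Rightarrow> nat list \<Rightarrow> enat" where
  "s_k k p = (if k \<le> 1 then \<infinity>
      else enat (greedy_count (\<lambda>q. H_plus k q \<or> H_minus k q) (length p) p))"

end

theory Submission
  imports Defs "HOL-Library.Sublist"
begin

text \<open>Write \<open>\<tau> = u x v\<close> with \<open>\<sigma>\<close> the standardisation of \<open>u v\<close>. An alternating pattern in \<open>\<tau>\<close>
  that uses \<open>x\<close> stays alternating when \<open>x\<close> is deleted together with a neighbouring entry of the
  pattern, since the remaining positions keep their parity; inverses are handled by
  \<open>\<sigma>\<^sup>-\<^sup>1 \<prec> \<tau>\<^sup>-\<^sup>1\<close>. For \<open>s\<^sub>k\<close>, membership in \<open>H\<^sub>k\<^sup>+ \<union> H\<^sub>k\<^sup>-\<close> passes to every interval, so the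
  greedy partition is a shortest partition into admissible intervals; cutting the interval of a
  shortest partition of \<open>u v\<close> at the position of \<open>x\<close> and inserting the singleton \<open>x\<close> gives an
  admissible partition of \<open>\<tau>\<close> with at most two more intervals.\<close>

section \<open>Standardisation and pattern containment\<close>

definition rank :: "nat list \<Rightarrow> nat \<Rightarrow> nat" where
  "rank xs x = card {y \<in> set xs. y \<le> x}"

lemma std_eq_map_rank: "std xs = map (rank xs) xs"
  by (simp add: std_def rank_def)

lemma length_std [simp]: "length (std xs) = length xs"
  by (simp add: std_def)

lemma nth_std: "i < length xs \<Longrightarrow> std xs ! i = rank xs (xs ! i)"
  by (simp add: std_eq_map_rank)

lemma std_Nil [simp]: "std [] = []"
  by (simp add: std_def)

lemma std_rev: "std (rev xs) = rev (std xs)"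
  by (simp add: std_def rev_map)

lemma rank_less_rank_iff:
  assumes "x \<in> set xs" "y \<in> set xs"
  shows "rank xs x < rank xs y \<longleftrightarrow> x < y"
proof
  assume "x < y"
  then have "{z \<in> set xs. z \<le> x} \<subset> {z \<in> set xs. z \<le> y}"
    using assms(2) by force
  then show "rank xs x < rank xs y"
    unfolding rank_def by (intro psubset_card_mono) auto
next
  assume "rank xs x < rank xs y"
  moreover have "y \<le> x \<Longrightarrow> rank xs y \<le> rank xs x"
    unfolding rank_def by (intro card_mono) auto
  ultimately show "x < y" by linarith
qed

lemma nth_std_less_iff:
  "i < length xs \<Longrightarrow> j < length xs \<Longrightarrow> std xs ! i < std xs ! j \<longleftrightarrow> xs ! i < xs ! j"
  by (simp add: nth_std rank_less_rank_iff)

lemma rank_bounds: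
  assumes "x \<in> set xs"
  shows "rank xs x \<in> {1..length xs}"
proof -
  have "0 < card {y \<in> set xs. y \<le> x}"
    using assms by (subst card_gt_0_iff) auto
  moreover have "card {y \<in> set xs. y \<le> x} \<le> card (set xs)"
    by (rule card_mono) auto
  ultimately show ?thesis
    using card_length[of xs] by (simp add: rank_def)
qed

lemma rank_nth:
  assumes "distinct xs" "i < length xs"
  shows "rank xs (xs ! i) = card {j. j < length xs \<and> xs ! j \<le> xs ! i}"
proof -
  have "{y \<in> set xs. y \<le> xs ! i} = (nth xs) ` {j. j < length xs \<and> xs ! j \<le> xs ! i}"
    by (auto simp: in_set_conv_nth)
  moreover have "inj_on (nth xs) {j. j < length xs \<and> xs ! j \<le> xs ! i}"
    using assms by (intro inj_on_nth) auto
  ultimately show ?thesis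
    unfolding rank_def by (simp add: card_image)
qed

lemma std_eqI:
  assumes "distinct xs" "distinct ys" "length xs = length ys"
    and "\<And>i j. i < length xs \<Longrightarrow> j < length xs \<Longrightarrow> xs ! i < xs ! j \<longleftrightarrow> ys ! i < ys ! j"
  shows "std xs = std ys"
proof (rule nth_equalityI)
  fix i assume i: "i < length (std xs)"
  have "{j. j < length xs \<and> xs ! j \<le> xs ! i} = {j. j < length ys \<and> ys ! j \<le> ys ! i}"
    using assms(3,4) i by (auto simp: not_less[symmetric])
  then show "std xs ! i = std ys ! i"
    using i assms(1-3) by (simp add: nth_std rank_nth)
qed (use assms(3) in simp)

lemma std_map_strict_mono:
  assumes "strict_mono_on (set xs) f" "distinct xs"
  shows "std (map f xs) = std xs"
proof (rule std_eqI)
  show "distinct (map f xs)"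
    using assms by (simp add: distinct_map strict_mono_on_imp_inj_on)
qed (use assms in \<open>simp_all add: strict_mono_on_less\<close>)

lemma std_map_rank:
  assumes "distinct ys" "set zs \<subseteq> set ys" "distinct zs"
  shows "std (map (rank ys) zs) = std zs"
  using assms by (intro std_map_strict_mono strict_mono_onI) (auto simp: rank_less_rank_iff subset_iff)

lemma distinct_std: "distinct xs \<Longrightarrow> distinct (std xs)"
  by (auto simp: distinct_conv_nth nth_std_less_iff nat_neq_iff)

lemma is_perm_std:
  assumes "distinct xs"
  shows "is_perm (length xs) (std xs)"
proof -
  have "set (std xs) \<subseteq> {1..length xs}"
    using rank_bounds[of _ xs] by (auto simp: std_eq_map_rank)
  moreover have "card (set (std xs)) = length xs"
    using distinct_std[OF assms] by (simp add: distinct_card)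
  ultimately show ?thesis
    using distinct_std[OF assms] by (simp add: is_perm_def card_subset_eq)
qed

lemma length_perm: "is_perm n p \<Longrightarrow> length p = n"
  unfolding is_perm_def by (metis card_atLeastAtMost diff_Suc_1 distinct_card)

lemma std_perm:
  assumes "is_perm n p"
  shows "std p = p"
proof -
  have "rank p v = v" if "v \<in> set p" for v
  proof -
    have "{y \<in> set p. y \<le> v} = {1..v}"
      using assms that by (auto simp: is_perm_def)
    then show ?thesis by (simp add: rank_def)
  qed
  then show ?thesis by (simp add: std_eq_map_rank map_idI)
qed

lemma contained_iff_subseq: "contained p r \<longleftrightarrow> (\<exists>zs. subseq zs r \<and> std zs = p)"
proof
  assume "contained p r"
  then show "\<exists>zs. subseq zs r \<and> std zs = p"
    unfolding contained_def restr_def using subseq_conv_nths by blast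
next
  assume "\<exists>zs. subseq zs r \<and> std zs = p"
  then obtain N where "std (nths r N) = p"
    by (auto simp: subseq_conv_nths)
  moreover have "nths r N = nths r (N \<inter> {..<length r})"
    unfolding nths_def by (rule arg_cong[where f = "map fst"], rule filter_cong) (auto simp: set_zip)
  ultimately show "contained p r"
    unfolding contained_def restr_def by (metis inf_le2)
qed

lemma contained_length: "contained r p \<Longrightarrow> length r \<le> length p"
  unfolding contained_iff_subseq by (metis length_std list_emb_length)

lemma contained_std:
  assumes "distinct ys" "subseq zs ys"
  shows "contained (std zs) (std ys)"
proof -
  have "subseq (map (rank ys) zs) (std ys)"
    using assms by (simp add: std_eq_map_rank subseq_map)
  moreover have "set zs \<subseteq> set ys" "distinct zs"
    using assms by (auto simp: subseq_conv_nths dest: in_set_nthsD)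
  ultimately show ?thesis
    using assms(1) std_map_rank by (auto simp: contained_iff_subseq)
qed

lemma subseq_length_Suc_obtain:
  assumes "subseq xs ys" "length ys = Suc (length xs)"
  obtains u x v where "ys = u @ x # v" "xs = u @ v"
  using assms
proof (induction arbitrary: thesis rule: list_emb.induct)
  case (list_emb_Nil ys)
  then show ?case by (cases ys) auto
next
  case (list_emb_Cons xs ys y)
  then have "xs = ys"
    using subseq_same_length by (metis Suc_inject length_Cons)
  then show ?case using list_emb_Cons.prems(1)[of "[]"] by simp
next
  case (list_emb_Cons2 x y xs ys)
  then obtain u z v where "ys = u @ z # v" "xs = u @ v" by auto
  then show ?case using list_emb_Cons2 by (metis append_Cons)
qed

lemma contained_length_Suc_obtain:
  assumes "contained \<sigma> \<tau>" "length \<tau> = Suc (length \<sigma>)"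
  obtains u x v where "\<tau> = u @ x # v" "\<sigma> = std (u @ v)"
proof -
  obtain zs where "subseq zs \<tau>" "std zs = \<sigma>"
    using assms(1) unfolding contained_iff_subseq by blast
  with assms(2) show thesis
    by (metis length_std subseq_length_Suc_obtain that)
qed

lemma subseq_imp_index_map:
  "subseq xs ys \<Longrightarrow>
    \<exists>f. strict_mono_on {..<length xs} f \<and> (\<forall>i<length xs. f i < length ys \<and> ys ! f i = xs ! i)"
proof (induction rule: list_emb.induct)
  case (list_emb_Cons xs ys y)
  then obtain f where "strict_mono_on {..<length xs} f" "\<forall>i<length xs. f i < length ys \<and> ys ! f i = xs ! i"
    by blast
  then show ?case
    by (intro exI[of _ "\<lambda>i. Suc (f i)"]) (auto simp: strict_mono_on_def)
next
  case (list_emb_Cons2 x y xs ys)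
  then obtain f where f: "strict_mono_on {..<length xs} f" "\<forall>i<length xs. f i < length ys \<and> ys ! f i = xs ! i"
    by blast
  define g where "g i = (case i of 0 \<Rightarrow> 0 | Suc k \<Rightarrow> Suc (f k))" for i
  have "strict_mono_on {..<length (x # xs)} g"
    using f(1) by (auto simp: strict_mono_on_def g_def split: nat.split)
  moreover have "\<forall>i<length (x # xs). g i < length (y # ys) \<and> (y # ys) ! g i = (x # xs) ! i"
    using f(2) list_emb_Cons2.hyps(1) by (auto simp: g_def split: nat.split)
  ultimately show ?case by blast
qed auto

lemma subseq_if_index_map:
  "strict_mono_on {..<length xs} f \<Longrightarrow> \<forall>i<length xs. f i < length ys \<and> ys ! f i = xs ! i \<Longrightarrow>
    subseq xs ys"
proof (induction xs arbitrary: ys f)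
  case (Cons x xs)
  define rest where "rest = drop (Suc (f 0)) ys"
  have after: "Suc (f 0) \<le> f (Suc i)" if "i < length xs" for i
    using strict_mono_onD[OF Cons.prems(1), of 0 "Suc i"] that by simp
  have "strict_mono_on {..<length xs} (\<lambda>i. f (Suc i) - Suc (f 0))"
  proof (rule strict_mono_onI)
    fix i j assume "i \<in> {..<length xs}" "j \<in> {..<length xs}" "i < j"
    then show "f (Suc i) - Suc (f 0) < f (Suc j) - Suc (f 0)"
      using strict_mono_onD[OF Cons.prems(1), of "Suc i" "Suc j"] after[of i] by simp
  qed
  moreover have "\<forall>i<length xs. f (Suc i) - Suc (f 0) < length rest \<and> rest ! (f (Suc i) - Suc (f 0)) = xs ! i"
  proof (intro allI impI)
    fix i assume "i < length xs"
    then show "f (Suc i) - Suc (f 0) < length rest \<and> rest ! (f (Suc i) - Suc (f 0)) = xs ! i"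
      using Cons.prems(2)[rule_format, of "Suc i"] after[of i] by (auto simp: rest_def)
  qed
  ultimately have "subseq xs rest"
    by (rule Cons.IH)
  moreover have "ys = take (f 0) ys @ x # rest"
    using Cons.prems(2) id_take_nth_drop[of "f 0" ys] by (auto simp: rest_def)
  moreover have "subseq (x # xs) (take (f 0) ys @ x # rest)"
    using \<open>subseq xs rest\<close> by (intro subseq_drop_many) simp
  ultimately show ?case by simp
qed simp

definition pattern_embedding :: "(nat \<Rightarrow> nat) \<Rightarrow> nat list \<Rightarrow> nat list \<Rightarrow> bool" where
  "pattern_embedding f r p \<longleftrightarrow> strict_mono_on {..<length r} f \<and> (\<forall>i<length r. f i < length p) \<and>
     (\<forall>i<length r. \<forall>j<length r. r ! i < r ! j \<longleftrightarrow> p ! f i < p ! f j)"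

lemma contained_perm_iff_embedding:
  assumes r: "is_perm m r" and p: "distinct p"
  shows "contained r p \<longleftrightarrow> (\<exists>f. pattern_embedding f r p)"
proof
  assume "contained r p"
  then obtain zs where zs: "subseq zs p" "std zs = r"
    unfolding contained_iff_subseq by blast
  then have "length zs = length r"
    by auto
  with zs show "\<exists>f. pattern_embedding f r p"
    unfolding pattern_embedding_def using subseq_imp_index_map by (metis nth_std_less_iff)
next
  assume "\<exists>f. pattern_embedding f r p"
  then obtain f where f: "strict_mono_on {..<m} f" "\<forall>i<m. f i < length p"
    "\<forall>i<m. \<forall>j<m. r ! i < r ! j \<longleftrightarrow> p ! f i < p ! f j"
    unfolding pattern_embedding_def length_perm[OF r] by blast
  define zs where "zs = map (\<lambda>i. p ! f i) [0..<m]"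
  have "subseq zs p"
    using f(1,2) by (intro subseq_if_index_map[of zs f]) (auto simp: zs_def)
  moreover have "distinct zs"
    using f(1,2) p strict_mono_on_imp_inj_on[OF f(1)]
    by (auto simp: zs_def distinct_conv_nth nth_eq_iff_index_eq inj_on_def)
  then have "std zs = std r"
    using f(3) r by (intro std_eqI) (auto simp: zs_def is_perm_def length_perm[OF r])
  ultimately show "contained r p"
    using std_perm[OF r] unfolding contained_iff_subseq by auto
qed

lemma length_perm_inv [simp]: "length (perm_inv xs) = length xs"
  by (auto simp: perm_inv_def not_less_eq_eq)

lemma nth_perm_inv: "a < length xs \<Longrightarrow> perm_inv xs ! a = Suc (THE i. i < length xs \<and> xs ! i = Suc a)"
  by (simp add: perm_inv_def del: upt_Suc)

lemma perm_inv_nth_perm: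
  assumes "is_perm m r" "i < m"
  shows "perm_inv r ! (r ! i - 1) = Suc i"
proof -
  have r: "length r = m" "distinct r" "r ! i \<in> {1..m}"
    using assms length_perm[OF assms(1)] nth_mem[of i r] by (auto simp: is_perm_def)
  then have "(THE j. j < m \<and> r ! j = r ! i) = i"
    using assms(2) by (auto simp: nth_eq_iff_index_eq)
  moreover have "Suc (r ! i - 1) = r ! i" "r ! i - 1 < length r"
    using r by auto
  ultimately show ?thesis
    using r(1) nth_perm_inv[of "r ! i - 1" r] by simp
qed

lemma perm_nth_perm_inv:
  assumes "is_perm m r" "a < m"
  shows "perm_inv r ! a \<in> {1..m}" "r ! (perm_inv r ! a - 1) = Suc a"
proof -
  have "Suc a \<in> set r"
    using assms by (simp add: is_perm_def)
  then obtain i where i: "i < m" "r ! i = Suc a"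
    using length_perm[OF assms(1)] by (auto simp: in_set_conv_nth)
  then have "perm_inv r ! a = Suc i"
    using perm_inv_nth_perm[OF assms(1) i(1)] by simp
  with i show "perm_inv r ! a \<in> {1..m}" "r ! (perm_inv r ! a - 1) = Suc a"
    by auto
qed

lemma is_perm_perm_inv:
  assumes "is_perm m r"
  shows "is_perm m (perm_inv r)"
proof -
  have "distinct (perm_inv r)"
    unfolding distinct_conv_nth using perm_nth_perm_inv(2)[OF assms] length_perm[OF assms]
    by (metis Suc_inject length_perm_inv)
  moreover have "set (perm_inv r) \<subseteq> {1..m}"
    using perm_nth_perm_inv(1)[OF assms] length_perm[OF assms] by (auto simp: in_set_conv_nth)
  ultimately show ?thesis
    using length_perm[OF assms] by (simp add: is_perm_def card_subset_eq distinct_card)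
qed

lemma pattern_embedding_perm_inv:
  assumes r: "is_perm m r" and p: "is_perm N p" and "pattern_embedding f r p"
  shows "pattern_embedding (\<lambda>a. p ! f (perm_inv r ! a - 1) - 1) (perm_inv r) (perm_inv p)"
proof -
  have f: "strict_mono_on {..<m} f" "\<forall>i<m. f i < N"
    "\<forall>i<m. \<forall>j<m. r ! i < r ! j \<longleftrightarrow> p ! f i < p ! f j"
    using assms(3) unfolding pattern_embedding_def length_perm[OF r] length_perm[OF p] by auto
  define ri where "ri a = perm_inv r ! a - 1" for a
  define g where "g a = p ! f (ri a) - 1" for a
  have g_eq: "g = (\<lambda>a. p ! f (perm_inv r ! a - 1) - 1)"
    by (simp add: g_def ri_def fun_eq_iff)
  have ri: "ri a < m" "r ! ri a = Suc a" "perm_inv r ! a = Suc (ri a)" if "a < m" for a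
    using perm_nth_perm_inv[OF r that] by (auto simp: ri_def)
  have pv: "p ! f (ri a) \<in> {1..N}" if "a < m" for a
    using f(2) ri(1)[OF that] p nth_mem[of "f (ri a)" p] by (auto simp: is_perm_def length_perm[OF p])
  have "strict_mono_on {..<m} g"
  proof (rule strict_mono_onI)
    fix a b assume "a \<in> {..<m}" "b \<in> {..<m}" "a < b"
    then have "r ! ri a < r ! ri b" "ri a < m" "ri b < m"
      using ri by auto
    then have "p ! f (ri a) < p ! f (ri b)"
      using f(3) by blast
    then show "g a < g b"
      using pv[of a] \<open>a \<in> {..<m}\<close> by (auto simp: g_def)
  qed
  moreover have "g a < N" if "a < m" for a
    using pv[OF that] by (auto simp: g_def)
  moreover have "perm_inv p ! g a = Suc (f (ri a))" if "a < m" for a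
    using perm_inv_nth_perm[OF p] f(2) ri(1)[OF that] by (simp add: g_def)
  then have "\<forall>a<m. \<forall>b<m. perm_inv r ! a < perm_inv r ! b \<longleftrightarrow> perm_inv p ! g a < perm_inv p ! g b"
    using ri strict_mono_on_less[OF f(1)] by simp
  ultimately show ?thesis
    unfolding pattern_embedding_def g_eq[symmetric] using length_perm[OF r] length_perm[OF p] by simp
qed

lemma contained_perm_inv:
  assumes r: "is_perm m r" and p: "is_perm N p" and "contained r p"
  shows "contained (perm_inv r) (perm_inv p)"
proof -
  obtain f where "pattern_embedding f r p"
    using assms(3) contained_perm_iff_embedding[OF r] p by (auto simp: is_perm_def)
  then show ?thesis
    using pattern_embedding_perm_inv[OF r p] contained_perm_iff_embedding[OF is_perm_perm_inv[OF r]]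
      is_perm_perm_inv[OF p] by (auto simp: is_perm_def)
qed

section \<open>Alternating patterns\<close>

lemma alternating_std_iff: "alternating (std ys) \<longleftrightarrow> alternating ys"
  by (simp add: alternating_def nth_std_less_iff)

lemma alternating_Nil [simp]: "alternating []"
  by (simp add: alternating_def)

lemma alternating_delete_adjacent:
  assumes "alternating (a @ [y, z] @ c)"
  shows "alternating (a @ c)"
  unfolding alternating_def
proof (intro allI impI)
  fix i j assume i: "i < length (a @ c)" and j: "j < length (a @ c)" and ij: "even i \<and> odd j"
  define f where "f k = (if k < length a then k else k + 2)" for k
  have f: "(a @ c) ! k = (a @ [y, z] @ c) ! f k" "f k < length (a @ [y, z] @ c)"
    if "k < length (a @ c)" for k
    using that by (auto simp: f_def nth_append)
  have "even (f i)" "odd (f j)"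
    using ij by (auto simp: f_def)
  then have "(a @ [y, z] @ c) ! f i > (a @ [y, z] @ c) ! f j"
    using assms f(2)[OF i] f(2)[OF j] unfolding alternating_def by blast
  then show "(a @ c) ! i > (a @ c) ! j"
    using f(1)[OF i] f(1)[OF j] by simp
qed

lemma subseq_append_Cons_cases:
  assumes "subseq ys (u @ x # v)"
  obtains "subseq ys (u @ v)" | a w where "ys = a @ x # w" "subseq a u" "subseq w v"
proof -
  obtain ys1 ys2 where ys: "ys = ys1 @ ys2" "subseq ys1 u" "subseq ys2 (x # v)"
    using assms by (rule subseq_appendE)
  consider "subseq ys2 v" | w where "ys2 = x # w" "subseq w v"
    using ys(3) by (cases ys2) (auto split: if_splits)
  then show thesis
  proof cases
    case 1
    then have "subseq ys (u @ v)"
      using ys(1,2) by (simp add: list_emb_append_mono)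
    then show thesis by (rule that(1))
  next
    case (2 w)
    then show thesis
      using that(2)[of ys1 w] ys(1,2) by simp
  qed
qed

lemma alternating_subseq_delete:
  assumes "subseq ys (u @ x # v)" "alternating ys"
  obtains zs where "subseq zs (u @ v)" "alternating zs" "length ys \<le> length zs + 2"
  using assms(1)
proof (cases rule: subseq_append_Cons_cases)
  case 1
  then show thesis
    using that[of ys] assms(2) by simp
next
  case (2 a w)
  consider "w \<noteq> []" | "w = []" "a \<noteq> []" | "w = []" "a = []"
    by blast
  then show thesis
  proof cases
    case 1
    then have "alternating (a @ tl w)"
      using assms(2) 2(1) alternating_delete_adjacent[of a x "hd w" "tl w"] by simp
    moreover have "subseq (tl w) v"
      using 2(3) 1 subseq_Cons'[of "hd w" "tl w" v] by simp
    then have "subseq (a @ tl w) (u @ v)"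
      using 2(2) by (intro list_emb_append_mono)
    ultimately show thesis
      using that[of "a @ tl w"] 2(1) by simp
  next
    case 2
    then have "ys = butlast a @ [last a, x] @ []"
      using \<open>ys = a @ x # w\<close> by simp
    then have "alternating (butlast a)"
      using assms(2) alternating_delete_adjacent[of "butlast a" "last a" x "[]"] by simp
    moreover have "subseq (butlast a) a"
      by (simp add: prefixeq_butlast prefix_imp_subseq)
    then have "subseq (butlast a) (u @ v)"
      using \<open>subseq a u\<close> by (metis subseq_order.order_trans subseq_rev_drop_many)
    ultimately show thesis
      using that[of "butlast a"] \<open>ys = a @ x # w\<close> 2 by simp
  next
    case 3
    then show thesis
      using that[of "[]"] \<open>ys = a @ x # w\<close> by simp
  qed
qed

lemma alternating_pattern_shrink:
  assumes "contained \<sigma> \<tau>" "length \<tau> = Suc (length \<sigma>)" "distinct \<tau>"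
    and "alternating r" "contained r \<tau>"
  obtains r' where "alternating r'" "contained r' \<sigma>" "length r \<le> length r' + 2"
proof -
  obtain u x v where \<tau>: "\<tau> = u @ x # v" and \<sigma>: "\<sigma> = std (u @ v)"
    using assms(1,2) by (rule contained_length_Suc_obtain)
  obtain ys where ys: "subseq ys \<tau>" "std ys = r"
    using assms(5) unfolding contained_iff_subseq by blast
  have "alternating ys"
    using assms(4) ys(2) alternating_std_iff by blast
  then obtain zs where zs: "subseq zs (u @ v)" "alternating zs" "length ys \<le> length zs + 2"
    using alternating_subseq_delete ys(1) \<tau> by blast
  have "distinct (u @ v)"
    using assms(3) \<tau> by simp
  then have "contained (std zs) \<sigma>"
    using contained_std zs(1) \<sigma> by simp
  moreover have "length r = length ys"
    using ys(2) by auto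
  ultimately show thesis
    using that[of "std zs"] zs by (simp add: alternating_std_iff)
qed

lemma finite_alternating_pattern_lengths:
  "finite {length r | r. alternating r \<and> (contained r p \<or> contained r (perm_inv p))}"
  by (rule finite_subset[of _ "{..length p}"]) (auto dest: contained_length)

lemma al_attained:
  obtains r where "alternating r" "contained r p \<or> contained r (perm_inv p)" "al p = length r"
proof -
  let ?L = "{length r | r. alternating r \<and> (contained r p \<or> contained r (perm_inv p))}"
  note finite_alternating_pattern_lengths[of p]
  moreover have "alternating [] \<and> contained [] p"
    by (auto simp: contained_iff_subseq)
  then have "?L \<noteq> {}"
    by (metis (mono_tags, lifting) empty_iff mem_Collect_eq)
  ultimately have "al p \<in> ?L"
    unfolding al_def by (rule Max_in)
  then show thesis
    using that by blast
qed

lemma length_le_al: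
  assumes "alternating r" "contained r p \<or> contained r (perm_inv p)"
  shows "length r \<le> al p"
  unfolding al_def using assms finite_alternating_pattern_lengths by (intro Max_ge) auto

theorem al_le_al_add_2:
  assumes \<sigma>: "is_perm n \<sigma>" and \<tau>: "is_perm (Suc n) \<tau>" and "contained \<sigma> \<tau>"
  shows "al \<tau> \<le> al \<sigma> + 2"
proof -
  have shrink: "\<exists>r'. alternating r' \<and> contained r' \<sigma>' \<and> length r \<le> length r' + 2"
    if "is_perm n \<sigma>'" "is_perm (Suc n) \<tau>'" "contained \<sigma>' \<tau>'" "alternating r" "contained r \<tau>'"
    for \<sigma>' \<tau>' r
    using alternating_pattern_shrink[of \<sigma>' \<tau>' r] that
    by (metis is_perm_def length_perm)
  obtain r where r: "alternating r" "contained r \<tau> \<or> contained r (perm_inv \<tau>)" "al \<tau> = length r"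
    by (rule al_attained)
  have "contained (perm_inv \<sigma>) (perm_inv \<tau>)"
    using contained_perm_inv assms by blast
  then obtain r' where "alternating r'" "contained r' \<sigma> \<or> contained r' (perm_inv \<sigma>)"
    "length r \<le> length r' + 2"
    using r(1,2) shrink[OF assms] shrink[OF is_perm_perm_inv[OF \<sigma>] is_perm_perm_inv[OF \<tau>]] by blast
  then show ?thesis
    using r(3) length_le_al[of r' \<sigma>] by simp
qed

section \<open>Sum decompositions and the classes \<open>H\<^sub>k\<^sup>+\<close>, \<open>H\<^sub>k\<^sup>-\<close>\<close>

lemma oplus_Nil_left [simp]: "oplus [] t = t"
  by (simp add: oplus_def)

lemma oplus_Nil_right [simp]: "oplus s [] = s"
  by (simp add: oplus_def)

lemma length_oplus [simp]: "length (oplus s t) = length s + length t"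
  by (simp add: oplus_def)

lemma oplus_assoc: "oplus (oplus a b) c = oplus a (oplus b c)"
  by (simp add: oplus_def add.assoc)

lemma oplus_eq_oplus_iff:
  "length s = length s' \<Longrightarrow> oplus s t = oplus s' t' \<longleftrightarrow> s = s' \<and> t = t'"
  by (auto simp: oplus_def inj_def dest: map_injective)

lemma foldr_oplus_append: "foldr oplus (xs @ ys) [] = oplus (foldr oplus xs []) (foldr oplus ys [])"
  by (induction xs) (simp_all add: oplus_assoc)

lemma foldr_oplus_concat:
  "foldr oplus (concat bss) [] = foldr oplus (map (\<lambda>bs. foldr oplus bs []) bss) []"
  by (induction bss) (simp_all add: foldr_oplus_append del: foldr_append)

lemma rev_oplus: "rev (oplus s t) = ominus (rev t) (rev s)"
  by (simp add: ominus_def oplus_def rev_map)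

lemma rev_ominus: "rev (ominus s t) = oplus (rev t) (rev s)"
  by (simp add: ominus_def oplus_def rev_map)

lemma foldr_oplus_eq_oplus: "foldr oplus xs t = oplus (foldr oplus xs []) t"
  by (induction xs) (simp_all add: oplus_assoc)

lemma rev_foldr_ominus: "rev (foldr ominus bs []) = foldr oplus (rev (map rev bs)) []"
proof (induction bs)
  case (Cons b bs)
  have "rev (foldr ominus (b # bs) []) = oplus (foldr oplus (rev (map rev bs)) []) (rev b)"
    using Cons.IH by (simp add: rev_ominus)
  also have "\<dots> = foldr oplus (rev (map rev bs)) (rev b)"
    by (rule foldr_oplus_eq_oplus[symmetric])
  finally show ?case by simp
qed simp

lemma up_indec_decomposition:
  assumes "is_perm (length p) p"
  obtains bs where "p = foldr oplus bs []"
    "\<forall>b\<in>set bs. b \<noteq> [] \<and> is_perm (length b) b \<and> up_indec b \<and> length b \<le> length p"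
  using assms
proof (induction "length p" arbitrary: p thesis rule: less_induct)
  case less
  show ?case
  proof (cases "p \<noteq> [] \<and> \<not> up_indec p")
    case True
    then obtain s t where st: "s \<noteq> []" "t \<noteq> []" "is_perm (length s) s" "is_perm (length t) t"
      "p = oplus s t"
      unfolding up_indec_def by blast
    then have "length s < length p" "length t < length p"
      by auto
    moreover obtain bs1 where bs1: "s = foldr oplus bs1 []"
      "\<forall>b\<in>set bs1. b \<noteq> [] \<and> is_perm (length b) b \<and> up_indec b \<and> length b \<le> length s"
      using less.hyps[OF \<open>length s < length p\<close> _ st(3)] by blast
    moreover obtain bs2 where bs2: "t = foldr oplus bs2 []"
      "\<forall>b\<in>set bs2. b \<noteq> [] \<and> is_perm (length b) b \<and> up_indec b \<and> length b \<le> length t"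
      using less.hyps[OF \<open>length t < length p\<close> _ st(4)] by blast
    ultimately have "\<forall>b\<in>set (bs1 @ bs2). b \<noteq> [] \<and> is_perm (length b) b \<and> up_indec b \<and> length b \<le> length p"
      by (metis Un_iff le_less_trans less_imp_le set_append)
    moreover have "p = foldr oplus (bs1 @ bs2) []"
      using st(5) bs1(1) bs2(1) by (simp only: foldr_oplus_append)
    ultimately show ?thesis
      using less.prems(1) by blast
  next
    case indec: False
    show ?thesis
    proof (cases "p = []")
      case True
      then show ?thesis
        using less.prems(1)[of "[]"] by simp
    next
      case False
      then show ?thesis
        using indec less.prems(1)[of "[p]"] less.prems(2) by simp
    qed
  qed
qed

text \<open>Unlike in \<open>H_plus\<close>, the blocks of a layered decomposition need not be indecomposable,
  so cutting one at an arbitrary position yields another layered decomposition.\<close>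

definition layered :: "nat \<Rightarrow> nat list \<Rightarrow> nat list list \<Rightarrow> bool" where
  "layered k ys cs \<longleftrightarrow> ys = concat cs \<and> (\<forall>c\<in>set cs. c \<noteq> [] \<and> length c < k) \<and>
     sorted_wrt (\<lambda>a b. \<forall>x\<in>set a. \<forall>y\<in>set b. x < y) cs"

lemma std_append_less:
  assumes d: "distinct (c @ r)" and lt: "\<forall>x\<in>set c. \<forall>y\<in>set r. x < y"
  shows "std (c @ r) = oplus (std c) (std r)"
proof -
  have "rank (c @ r) x = rank c x" if "x \<in> set c" for x
  proof -
    have "{z \<in> set (c @ r). z \<le> x} = {z \<in> set c. z \<le> x}"
      using lt that by force
    then show ?thesis by (simp add: rank_def)
  qed
  moreover have "rank (c @ r) y = length c + rank r y" if "y \<in> set r" for y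
  proof -
    have "{z \<in> set (c @ r). z \<le> y} = set c \<union> {z \<in> set r. z \<le> y}"
      using lt that by force
    moreover have "set c \<inter> {z \<in> set r. z \<le> y} = {}" "card (set c) = length c"
      using d by (auto simp: distinct_card)
    ultimately show ?thesis by (simp add: rank_def card_Un_disjoint)
  qed
  ultimately show ?thesis
    by (simp add: std_eq_map_rank oplus_def)
qed

text \<open>Conversely, if the first \<open>length c\<close> entries of \<open>std (c @ r)\<close> form a permutation, they are
  the smallest values, so every entry of \<open>c\<close> lies below every entry of \<open>r\<close>.\<close>

lemma std_append_eq_oplusD:
  assumes d: "distinct (c @ r)" and b: "is_perm (length c) b"
    and eq: "std (c @ r) = oplus b q"
  shows "\<forall>x\<in>set c. \<forall>y\<in>set r. x < y" "std c = b" "std r = q"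
proof -
  let ?R = "rank (c @ r)"
  have std_cr: "std (c @ r) = map ?R c @ map ?R r"
    by (simp add: std_eq_map_rank)
  have "map ?R c @ map ?R r = b @ map ((+) (length c)) q"
    using eq std_cr by (simp add: oplus_def length_perm[OF b])
  then have Rc: "map ?R c = b"
    using length_perm[OF b] by simp
  have "?R y \<notin> set b" "?R y \<in> {1..length c + length r}" if "y \<in> set r" for y
  proof -
    have "distinct (map ?R c @ map ?R r)"
      using distinct_std[OF d] std_cr by simp
    then show "?R y \<notin> set b"
      using that Rc by auto
    show "?R y \<in> {1..length c + length r}"
      using rank_bounds[of y "c @ r"] that by simp
  qed
  then have above: "?R y > length c" if "y \<in> set r" for y
    using b that by (force simp: is_perm_def)
  have below: "?R x \<le> length c" if "x \<in> set c" for x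
    using that b Rc by (auto simp: is_perm_def)
  show lt: "\<forall>x\<in>set c. \<forall>y\<in>set r. x < y"
  proof (intro ballI)
    fix x y assume "x \<in> set c" "y \<in> set r"
    then have "?R x < ?R y"
      using above below by (meson le_less_trans)
    then show "x < y"
      using rank_less_rank_iff[of x "c @ r" y] \<open>x \<in> set c\<close> \<open>y \<in> set r\<close> by simp
  qed
  have "oplus (std c) (std r) = oplus b q"
    using std_append_less[OF d lt] eq by simp
  then show "std c = b" "std r = q"
    using oplus_eq_oplus_iff[of "std c" b "std r" q] length_perm[OF b] by simp_all
qed

lemma std_concat_layered:
  "distinct ys \<Longrightarrow> layered k ys cs \<Longrightarrow> std ys = foldr oplus (map std cs) []"
proof (induction cs arbitrary: ys)
  case (Cons c cs)
  then have "ys = c @ concat cs" "layered k (concat cs) cs" "\<forall>x\<in>set c. \<forall>y\<in>set (concat cs). x < y"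
    by (auto simp: layered_def)
  then show ?case
    using Cons by (simp add: std_append_less)
qed (simp add: layered_def)

lemma layered_if_std_eq_foldr_oplus:
  "std ys = foldr oplus bs [] \<Longrightarrow> \<forall>b\<in>set bs. b \<noteq> [] \<and> is_perm (length b) b \<and> length b < k \<Longrightarrow>
    distinct ys \<Longrightarrow> \<exists>cs. layered k ys cs"
proof (induction bs arbitrary: ys)
  case Nil
  have "ys = []"
    using arg_cong[OF Nil.prems(1), of length] by simp
  then have "layered k ys []"
    by (simp add: layered_def)
  then show ?case by blast
next
  case (Cons b bs)
  define c where "c = take (length b) ys"
  define r where "r = drop (length b) ys"
  have "length (std ys) = length b + length (foldr oplus bs [])"
    using Cons.prems(1) by simp
  then have "is_perm (length c) b"
    using Cons.prems(2) by (simp add: c_def)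
  moreover have "distinct (c @ r)" "std (c @ r) = oplus b (foldr oplus bs [])"
    using Cons.prems by (simp_all add: c_def r_def)
  ultimately have cr: "\<forall>x\<in>set c. \<forall>y\<in>set r. x < y" "std c = b" "std r = foldr oplus bs []"
    by (blast dest: std_append_eq_oplusD)+
  have "\<exists>cs. layered k r cs"
    using Cons.IH[OF cr(3)] Cons.prems(2,3) by (simp add: r_def)
  then obtain cs where "layered k r cs"
    by blast
  moreover have "length c = length b"
    using cr(2) length_std by metis
  moreover have "ys = c @ r"
    by (simp add: c_def r_def)
  ultimately have "layered k ys (c # cs)"
    using cr(1) Cons.prems(2) by (auto simp: layered_def)
  then show ?case by blast
qed

lemma H_plus_std_if_layered:
  assumes "distinct ys" "layered k ys cs"
  shows "H_plus k (std ys)"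
proof -
  have "\<exists>bs. std c = foldr oplus bs [] \<and>
      (\<forall>b\<in>set bs. b \<noteq> [] \<and> is_perm (length b) b \<and> up_indec b \<and> length b < k)"
    if "c \<in> set cs" for c
  proof -
    have "distinct c" "length c < k"
      using assms that by (auto simp: layered_def distinct_concat_iff)
    then show ?thesis
      using up_indec_decomposition[of "std c"] is_perm_std[of c]
      by (metis le_less_trans length_std)
  qed
  then obtain F where F: "\<forall>c\<in>set cs. std c = foldr oplus (F c) [] \<and>
      (\<forall>b\<in>set (F c). b \<noteq> [] \<and> is_perm (length b) b \<and> up_indec b \<and> length b < k)"
    by metis
  have "std ys = foldr oplus (map std cs) []"
    using assms by (rule std_concat_layered)
  also have "map std cs = map (\<lambda>bs. foldr oplus bs []) (map F cs)"
    using F by auto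
  finally have "std ys = foldr oplus (concat (map F cs)) []"
    by (simp add: foldr_oplus_concat)
  then show ?thesis
    unfolding H_plus_def using F by (intro exI[of _ "concat (map F cs)"]) auto
qed

lemma H_plus_std_iff_layered:
  assumes "distinct ys"
  shows "H_plus k (std ys) \<longleftrightarrow> (\<exists>cs. layered k ys cs)"
proof
  assume "H_plus k (std ys)"
  then obtain bs where "std ys = foldr oplus bs []"
    "\<forall>b\<in>set bs. b \<noteq> [] \<and> is_perm (length b) b \<and> length b < k"
    unfolding H_plus_def by blast
  then show "\<exists>cs. layered k ys cs"
    using assms by (rule layered_if_std_eq_foldr_oplus)
qed (use assms H_plus_std_if_layered in blast)

lemma layered_take:
  "layered k ys cs \<Longrightarrow> \<exists>cs'. layered k (take i ys) cs'"
proof (induction cs arbitrary: i ys)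
  case Nil
  then have "layered k (take i ys) []"
    by (simp add: layered_def)
  then show ?case by blast
next
  case (Cons c cs)
  then have ys: "ys = c @ concat cs" and cs: "layered k (concat cs) cs"
    and lt: "\<forall>d\<in>set cs. \<forall>x\<in>set c. \<forall>y\<in>set d. x < y" and c: "c \<noteq> []" "length c < k"
    by (auto simp: layered_def)
  show ?case
  proof (cases "i \<le> length c")
    case True
    then have "layered k (take i ys) (if i = 0 then [] else [take i c])"
      using ys c by (auto simp: layered_def)
    then show ?thesis by blast
  next
    case False
    obtain cs' where cs': "layered k (take (i - length c) (concat cs)) cs'"
      using Cons.IH[OF cs] by blast
    have "\<forall>d\<in>set cs'. \<forall>x\<in>set c. \<forall>y\<in>set d. x < y"
    proof (intro ballI)
      fix d x y assume "d \<in> set cs'" "x \<in> set c" "y \<in> set d"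
      then have "y \<in> set (take (i - length c) (concat cs))"
        using cs' by (auto simp: layered_def)
      then have "y \<in> set (concat cs)"
        by (rule in_set_takeD)
      then show "x < y"
        using lt \<open>x \<in> set c\<close> by auto
    qed
    then have "layered k (take i ys) (c # cs')"
      using cs' c ys False by (auto simp: layered_def)
    then show ?thesis by blast
  qed
qed

lemma layered_drop:
  "layered k ys cs \<Longrightarrow> \<exists>cs'. layered k (drop i ys) cs'"
proof (induction cs arbitrary: i ys)
  case Nil
  then have "layered k (drop i ys) []"
    by (simp add: layered_def)
  then show ?case by blast
next
  case (Cons c cs)
  then have ys: "ys = c @ concat cs" and cs: "layered k (concat cs) cs"
    and lt: "\<forall>d\<in>set cs. \<forall>x\<in>set c. \<forall>y\<in>set d. x < y" and c: "c \<noteq> []" "length c < k"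
    by (auto simp: layered_def)
  show ?case
  proof (cases "i < length c")
    case True
    have "\<forall>d\<in>set cs. \<forall>x\<in>set (drop i c). \<forall>y\<in>set d. x < y"
      using lt by (auto dest: in_set_dropD)
    then have "layered k (drop i ys) (drop i c # cs)"
      using cs c ys True by (auto simp: layered_def)
    then show ?thesis by blast
  next
    case False
    then show ?thesis
      using Cons.IH[OF cs, of "i - length c"] ys by simp
  qed
qed

definition factor_closed :: "(nat list \<Rightarrow> bool) \<Rightarrow> bool" where
  "factor_closed Q \<longleftrightarrow> (\<forall>zs i. distinct zs \<longrightarrow> Q zs \<longrightarrow> Q (take i zs) \<and> Q (drop i zs))"

lemma factor_closed_H_plus: "factor_closed (\<lambda>zs. H_plus k (std zs))"
  unfolding factor_closed_def
  by (metis H_plus_std_iff_layered distinct_drop distinct_take layered_drop layered_take)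

lemma is_perm_rev [simp]: "is_perm n (rev b) \<longleftrightarrow> is_perm n b"
  by (simp add: is_perm_def)

lemma up_indec_rev_iff: "up_indec (rev b) \<longleftrightarrow> down_indec b"
proof
  assume up: "up_indec (rev b)"
  show "down_indec b"
    unfolding down_indec_def
  proof clarify
    fix s t assume st: "s \<noteq> []" "t \<noteq> []" "is_perm (length s) s" "is_perm (length t) t"
      and "b = ominus s t"
    then have "rev b = oplus (rev t) (rev s)"
      by (simp add: rev_ominus)
    moreover have "rev t \<noteq> []" "rev s \<noteq> []"
      "is_perm (length (rev t)) (rev t)" "is_perm (length (rev s)) (rev s)"
      using st by simp_all
    ultimately show False
      using up unfolding up_indec_def by blast
  qed
next
  assume down: "down_indec b"
  show "up_indec (rev b)"
    unfolding up_indec_def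
  proof clarify
    fix s t assume st: "s \<noteq> []" "t \<noteq> []" "is_perm (length s) s" "is_perm (length t) t"
      and "rev b = oplus s t"
    then have "b = ominus (rev t) (rev s)"
      by (metis rev_oplus rev_rev_ident)
    moreover have "rev t \<noteq> []" "rev s \<noteq> []"
      "is_perm (length (rev t)) (rev t)" "is_perm (length (rev s)) (rev s)"
      using st by simp_all
    ultimately show False
      using down unfolding down_indec_def by blast
  qed
qed

lemma H_minus_iff_H_plus_rev: "H_minus k q \<longleftrightarrow> H_plus k (rev q)"
  unfolding H_minus_def H_plus_def
proof safe
  fix bs assume "\<forall>b\<in>set bs. b \<noteq> [] \<and> is_perm (length b) b \<and> down_indec b \<and> length b < k"
  then show "\<exists>cs. rev (foldr ominus bs []) = foldr oplus cs [] \<and>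
      (\<forall>b\<in>set cs. b \<noteq> [] \<and> is_perm (length b) b \<and> up_indec b \<and> length b < k)"
    by (intro exI[of _ "rev (map rev bs)"]) (auto simp: rev_foldr_ominus up_indec_rev_iff)
next
  fix bs assume bs: "rev q = foldr oplus bs []"
    "\<forall>b\<in>set bs. b \<noteq> [] \<and> is_perm (length b) b \<and> up_indec b \<and> length b < k"
  have "rev (foldr ominus (rev (map rev bs)) []) = rev q"
    using bs(1) by (simp add: rev_foldr_ominus rev_map comp_def)
  then show "\<exists>cs. q = foldr ominus cs [] \<and>
      (\<forall>b\<in>set cs. b \<noteq> [] \<and> is_perm (length b) b \<and> down_indec b \<and> length b < k)"
    using bs(2) by (intro exI[of _ "rev (map rev bs)"]) (auto simp: up_indec_rev_iff[symmetric])
qed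

lemma factor_closed_H_minus: "factor_closed (\<lambda>zs. H_minus k (std zs))"
proof -
  have "H_minus k (std (take i zs)) \<and> H_minus k (std (drop i zs))"
    if "distinct zs" "H_minus k (std zs)" for zs :: "nat list" and i
  proof -
    have "H_plus k (std (rev zs))"
      using that(2) by (simp add: H_minus_iff_H_plus_rev std_rev)
    then have "H_plus k (std (drop (length zs - i) (rev zs)))" "H_plus k (std (take (length zs - i) (rev zs)))"
      using factor_closed_H_plus[of k] that(1) unfolding factor_closed_def by simp_all
    then show ?thesis
      by (simp add: H_minus_iff_H_plus_rev rev_take rev_drop flip: std_rev)
  qed
  then show ?thesis
    unfolding factor_closed_def by blast
qed

lemma factor_closed_disj: "factor_closed P \<Longrightarrow> factor_closed Q \<Longrightarrow> factor_closed (\<lambda>zs. P zs \<or> Q zs)"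
  unfolding factor_closed_def by blast

lemma H_plus_singleton:
  assumes "k \<ge> 2"
  shows "H_plus k (std [x])"
proof -
  have "{y. y = x \<and> y \<le> x} = {x}"
    by auto
  then have "std [x] = [1]"
    by (simp add: std_def)
  moreover have "up_indec [1]"
    unfolding up_indec_def by (auto simp: oplus_def Cons_eq_append_conv)
  ultimately show ?thesis
    unfolding H_plus_def using assms by (intro exI[of _ "[[1]]"]) (auto simp: is_perm_def)
qed

section \<open>Greedy interval partitions\<close>

definition interval_partition :: "(nat list \<Rightarrow> bool) \<Rightarrow> nat list \<Rightarrow> nat list list \<Rightarrow> bool" where
  "interval_partition Q xs segs \<longleftrightarrow> concat segs = xs \<and> (\<forall>s\<in>set segs. s \<noteq> [] \<and> Q s)"

lemma interval_partition_drop: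
  assumes "factor_closed Q"
  shows "distinct xs \<Longrightarrow> interval_partition Q xs segs \<Longrightarrow>
    \<exists>segs'. interval_partition Q (drop d xs) segs' \<and> length segs' \<le> length segs"
proof (induction segs arbitrary: d xs)
  case Nil
  then have "interval_partition Q (drop d xs) []"
    by (simp add: interval_partition_def)
  then show ?case by auto
next
  case (Cons s segs)
  have xs: "xs = s @ concat segs" and s: "s \<noteq> []" "Q s"
    and segs: "interval_partition Q (concat segs) segs"
    using Cons.prems(2) by (auto simp: interval_partition_def)
  show ?case
  proof (cases "d < length s")
    case True
    have "Q (drop d s)"
      using assms s(2) Cons.prems(1) xs unfolding factor_closed_def by simp
    then have "interval_partition Q (drop d xs) (drop d s # segs)"
      using True xs segs by (auto simp: interval_partition_def)
    then show ?thesis by fastforce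
  next
    case False
    then have "drop d xs = drop (d - length s) (concat segs)"
      using xs by simp
    then show ?thesis
      using Cons.IH[OF _ segs, of "d - length s"] Cons.prems(1) xs by fastforce
  qed
qed

lemma greedy_count_le_partition:
  assumes "factor_closed (\<lambda>zs. P (std zs))"
  shows "distinct xs \<Longrightarrow> interval_partition (\<lambda>zs. P (std zs)) xs segs \<Longrightarrow>
    greedy_count P f xs \<le> length segs"
proof (induction f arbitrary: xs segs)
  case (Suc f)
  show ?case
  proof (cases "xs = []")
    case False
    then obtain s segs0 where segs: "segs = s # segs0"
      using Suc.prems(2) by (cases segs) (auto simp: interval_partition_def)
    have xs: "xs = s @ concat segs0" and s: "P (std s)"
      and segs0: "interval_partition (\<lambda>zs. P (std zs)) (concat segs0) segs0"
      using Suc.prems(2) segs by (auto simp: interval_partition_def)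
    define m where "m = (GREATEST j. j \<le> length xs \<and> P (std (take j xs)))"
    have "length s \<le> length xs \<and> P (std (take (length s) xs))"
      using xs s by simp
    then have "length s \<le> m"
      unfolding m_def by (rule Greatest_le_nat[where b = "length xs"]) auto
    then have "drop m xs = drop (m - length s) (concat segs0)"
      using xs by (metis append_eq_conv_conj drop_drop le_add_diff_inverse2)
    moreover have "distinct (concat segs0)"
      using Suc.prems(1) xs by simp
    ultimately obtain segs' where "interval_partition (\<lambda>zs. P (std zs)) (drop m xs) segs'"
      "length segs' \<le> length segs0"
      using interval_partition_drop[OF assms _ segs0, of "m - length s"] by auto
    moreover have "distinct (drop m xs)"
      using Suc.prems(1) by simp
    ultimately have "greedy_count P f (drop m xs) \<le> length segs0"
      using Suc.IH by fastforce
    then show ?thesis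
      using False segs by (simp add: m_def Let_def)
  qed simp
qed simp

lemma greedy_count_partition:
  assumes "\<And>x. P (std [x])"
  shows "length xs \<le> f \<Longrightarrow>
    \<exists>segs. interval_partition (\<lambda>zs. P (std zs)) xs segs \<and> length segs = greedy_count P f xs"
proof (induction f arbitrary: xs)
  case 0
  then have "interval_partition (\<lambda>zs. P (std zs)) xs []"
    by (simp add: interval_partition_def)
  then show ?case by auto
next
  case (Suc f)
  show ?case
  proof (cases "xs = []")
    case True
    then have "interval_partition (\<lambda>zs. P (std zs)) xs []"
      by (simp add: interval_partition_def)
    then show ?thesis
      using True by auto
  next
    case False
    let ?admissible = "\<lambda>j. j \<le> length xs \<and> P (std (take j xs))"
    define m where "m = (GREATEST j. ?admissible j)"
    have "?admissible 1"
      using False assms[of "hd xs"] by (cases xs) auto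
    have m: "1 \<le> m" "?admissible m"
      unfolding m_def
      using Greatest_le_nat[where b = "length xs" and P = ?admissible and k = 1]
        GreatestI_nat[where b = "length xs" and P = ?admissible and k = 1] \<open>?admissible 1\<close>
      by blast+
    then have "length (drop m xs) \<le> f"
      using Suc.prems by simp
    then obtain segs where segs: "interval_partition (\<lambda>zs. P (std zs)) (drop m xs) segs"
      "length segs = greedy_count P f (drop m xs)"
      using Suc.IH by blast
    have "interval_partition (\<lambda>zs. P (std zs)) xs (take m xs # segs)"
      using segs(1) m False by (auto simp: interval_partition_def)
    moreover have "greedy_count P (Suc f) xs = Suc (greedy_count P f (drop m xs))"
      using False by (simp add: m_def Let_def)
    ultimately show ?thesis
      using segs(2) by (intro exI[of _ "take m xs # segs"]) auto
  qed
qed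

text \<open>The greedy procedure only looks at standardisations, which order-preserving maps do not
  change.\<close>

lemma greedy_count_map_strict_mono:
  "strict_mono_on (set xs) g \<Longrightarrow> distinct xs \<Longrightarrow> greedy_count P f (map g xs) = greedy_count P f xs"
proof (induction f arbitrary: xs)
  case (Suc f)
  have "std (take j (map g xs)) = std (take j xs)" for j
    using Suc.prems by (simp add: take_map std_map_strict_mono monotone_on_subset set_take_subset)
  moreover have "greedy_count P f (map g (drop j xs)) = greedy_count P f (drop j xs)" for j
    using Suc by (simp add: monotone_on_subset set_drop_subset)
  ultimately show ?case
    by (simp add: drop_map Let_def)
qed simp

lemma interval_partition_insert:
  assumes "factor_closed Q" "Q [x]"
  shows "distinct (a @ x # b) \<Longrightarrow> interval_partition Q (a @ b) segs \<Longrightarrow>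
    \<exists>segs'. interval_partition Q (a @ x # b) segs' \<and> length segs' \<le> length segs + 2"
proof (induction segs arbitrary: a b)
  case Nil
  then have "interval_partition Q (a @ x # b) [[x]]"
    using assms(2) by (simp add: interval_partition_def)
  then show ?case by fastforce
next
  case (Cons s segs)
  have e: "s @ concat segs = a @ b" and s: "s \<noteq> []" "Q s"
    and segs: "interval_partition Q (concat segs) segs"
    using Cons.prems(2) by (auto simp: interval_partition_def)
  from e obtain us where "s = a @ us \<and> us @ concat segs = b \<or> s @ us = a \<and> concat segs = us @ b"
    by (auto simp: append_eq_append_conv2)
  then show ?case
  proof
    assume split: "s = a @ us \<and> us @ concat segs = b"
    then have "distinct s"
      using Cons.prems(1) by auto
    then have "Q a" "Q us"
      using assms(1) s(2) split unfolding factor_closed_def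
      by (metis append_eq_conv_conj)+
    define segs' where
      "segs' = (if a = [] then [] else [a]) @ [[x]] @ (if us = [] then [] else [us]) @ segs"
    have "interval_partition Q (a @ x # b) segs'"
      using split segs \<open>Q a\<close> \<open>Q us\<close> assms(2)
      by (auto simp: segs'_def interval_partition_def)
    moreover have "length segs' \<le> length (s # segs) + 2"
      by (simp add: segs'_def)
    ultimately show ?thesis by blast
  next
    assume split: "s @ us = a \<and> concat segs = us @ b"
    then have "distinct (us @ x # b)"
      using Cons.prems(1) by auto
    then obtain segs' where "interval_partition Q (us @ x # b) segs'" "length segs' \<le> length segs + 2"
      using Cons.IH[of us b] segs split by auto
    then have "interval_partition Q (a @ x # b) (s # segs')"
      using s split by (auto simp: interval_partition_def)
    then show ?thesis
      using \<open>length segs' \<le> length segs + 2\<close> by fastforce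
  qed
qed

lemma greedy_count_insert:
  assumes "factor_closed (\<lambda>zs. P (std zs))" "\<And>y. P (std [y])" "distinct (u @ x # v)"
  shows "greedy_count P (length (u @ x # v)) (u @ x # v)
    \<le> greedy_count P (length (u @ v)) (std (u @ v)) + 2"
proof -
  have "distinct (u @ v)"
    using assms(3) by simp
  then have "greedy_count P (length (u @ v)) (std (u @ v)) = greedy_count P (length (u @ v)) (u @ v)"
    unfolding std_eq_map_rank
    by (intro greedy_count_map_strict_mono strict_mono_onI) (simp_all add: rank_less_rank_iff)
  moreover obtain segs where segs: "interval_partition (\<lambda>zs. P (std zs)) (u @ v) segs"
    "length segs = greedy_count P (length (u @ v)) (u @ v)"
    using greedy_count_partition[of P "u @ v"] assms(2) by blast
  moreover obtain segs' where segs': "interval_partition (\<lambda>zs. P (std zs)) (u @ x # v) segs'"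
    "length segs' \<le> length segs + 2"
    using interval_partition_insert[OF assms(1) assms(2) assms(3) segs(1)] by blast
  moreover have "greedy_count P (length (u @ x # v)) (u @ x # v) \<le> length segs'"
    using greedy_count_le_partition[OF assms(1) assms(3) segs'(1)] .
  ultimately show ?thesis
    by linarith
qed

lemma s_k_le_s_k_add_2:
  assumes "contained \<sigma> \<tau>" "length \<tau> = Suc (length \<sigma>)" "distinct \<tau>"
  shows "s_k k \<tau> \<le> s_k k \<sigma> + 2"
proof (cases "k \<le> 1")
  case False
  define P where "P q \<longleftrightarrow> H_plus k q \<or> H_minus k q" for q
  obtain u x v where \<tau>: "\<tau> = u @ x # v" and \<sigma>: "\<sigma> = std (u @ v)"
    using assms(1,2) by (rule contained_length_Suc_obtain)
  have "factor_closed (\<lambda>zs. P (std zs))"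
    unfolding P_def by (intro factor_closed_disj factor_closed_H_plus factor_closed_H_minus)
  moreover have "P (std [y])" for y
    using H_plus_singleton False by (simp add: P_def)
  ultimately have "greedy_count P (length \<tau>) \<tau> \<le> greedy_count P (length \<sigma>) \<sigma> + 2"
    using greedy_count_insert assms(3) \<tau> \<sigma> by simp
  then show ?thesis
    using False by (simp add: s_k_def P_def[abs_def] one_enat_def numeral_eq_enat)
qed (simp add: s_k_def)

theorem mainTheorem5:
  fixes n :: nat and \<sigma> \<tau> :: "nat list"
  assumes "is_perm n \<sigma>" and "is_perm (Suc n) \<tau>" and "contained \<sigma> \<tau>"
  shows "al \<tau> \<le> al \<sigma> + 2 \<and> (\<forall>k::nat. k \<ge> 1 \<longrightarrow> s_k k \<tau> \<le> s_k k \<sigma> + 2)"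
proof -
  have "length \<tau> = Suc (length \<sigma>)" "distinct \<tau>"
    using assms(2) length_perm[OF assms(1)] length_perm[OF assms(2)] by (simp_all add: is_perm_def)
  then show ?thesis
    using al_le_al_add_2[OF assms] s_k_le_s_k_add_2[OF assms(3)] by blast
qed

end
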